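(* If an $(M,d_s,d_x,\epsilon)$ code exists, then \[\epsilon\ge\inf_{P_{ZY|X}}\ \sup_{P_{\bar X|\bar Z\bar Y}}\ \sup_{\gamma\ge0}\Big\{\mathbb P\big[f_{\bar X|\bar Z\bar Y}(S,X,Z,Y)\ge\gamma\big]-\exp(-\gamma)\Big\},\] where the infimum is over conditional distributions $P_{ZY|X}:\mathcal X\to\widehat{\mathcal S}\times\widehat{\mathcal X}$, $(S,X,Z,Y)\sim P_{SX}P_{ZY|X}$, the middle supremum is over conditional distributions $P_{\bar X|\bar Z\bar Y}:\widehat{\mathcal S}\times\widehat{\mathcal X}\to\mathcal X$ such that the Radon–Nikodym derivative of $P_{\bar X|\bar Z=z,\bar Y=y}$ with respect to $P_X$ at $x$ exists for $P_{ZY|X}P_X$-a.e. $(z,y,x)$, and \[f_{\bar X|\bar Z\bar Y}(s,x,z,y)=\log\frac{\mathrm dP_{\bar X|\bar Z=z,\bar Y=y}}{\mathrm dP_X}(x)+\sup_{\lambda_s\ge0}\lambda_s(\mathsf d_s(s,z)-d_s)+\sup_{\lambda_x\ge0}\lambda_x(\mathsf d_x(x,y)-d_x)-\log M.\]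
   Context: Let $\mathcal S,\mathcal X,\widehat{\mathcal S},\widehat{\mathcal X}$ be finite sets, $P_{SX}$ a distribution on $\mathcal S\times\mathcal X$, and $\mathsf d_s:\mathcal S\times\widehat{\mathcal S}\to[0,\infty)$, $\mathsf d_x:\mathcal X\times\widehat{\mathcal X}\to[0,\infty)$ distortion measures; fix $d_s,d_x\ge0$. An $(M,d_s,d_x,\epsilon)$ code is a random encoder $P_{U|X}:\mathcal X\to\{1,\dots,M\}$ and a random decoder $P_{ZY|U}:\{1,\dots,M\}\to\widehat{\mathcal S}\times\widehat{\mathcal X}$ (so $S-X-U-(Z,Y)$) such that $\mathbb P[\mathsf d_s(S,Z)>d_s\text{ or }\mathsf d_x(X,Y)>d_x]\le\epsilon$. $\log$ and $\exp$ are to a common base. *)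

theory Defs
  imports "HOL-Probability.Probability"
begin

definition elog :: "real \<Rightarrow> ennreal \<Rightarrow> ereal" where
  "elog b r = (if r = 0 then -\<infinity> else if r = \<infinity> then \<infinity> else ereal (log b (enn2real r)))"

definition is_code ::
  "('s \<times> 'x) pmf \<Rightarrow> ('s \<Rightarrow> 'zs \<Rightarrow> real) \<Rightarrow> ('x \<Rightarrow> 'yx \<Rightarrow> real) \<Rightarrow>
   nat \<Rightarrow> real \<Rightarrow> real \<Rightarrow> real \<Rightarrow> ('x \<Rightarrow> nat pmf) \<Rightarrow> (nat \<Rightarrow> ('zs \<times> 'yx) pmf) \<Rightarrow> bool" where
  "is_code PSX ds dx M Ds Dx eps enc dec \<longleftrightarrow>
     (\<forall>x. set_pmf (enc x) \<subseteq> {1..M}) \<and>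
     measure_pmf.prob
       (do { (s, x) \<leftarrow> PSX; u \<leftarrow> enc x; (z, y) \<leftarrow> dec u; return_pmf (s, x, z, y) })
       {(s, x, z, y). ds s z > Ds \<or> dx x y > Dx} \<le> eps"

definition joint_SXZY :: "('s \<times> 'x) pmf \<Rightarrow> ('x \<Rightarrow> ('zs \<times> 'yx) pmf) \<Rightarrow> ('s \<times> 'x \<times> 'zs \<times> 'yx) pmf" where
  "joint_SXZY PSX K = do { (s, x) \<leftarrow> PSX; (z, y) \<leftarrow> K x; return_pmf (s, x, z, y) }"

text \<open>Admissible backward channels: the Radon-Nikodym derivative of P_{Xbar|Zbar=z,Ybar=y}
  w.r.t. P_X exists (absolute continuity) for P_{ZY|X} P_X - a.e. (z,y,x).\<close>
definition admissible_back ::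
  "'x pmf \<Rightarrow> ('x \<Rightarrow> ('zs \<times> 'yx) pmf) \<Rightarrow> ('zs \<times> 'yx \<Rightarrow> 'x pmf) \<Rightarrow> bool" where
  "admissible_back PX K Q \<longleftrightarrow>
     (\<forall>x z y. pmf PX x * pmf (K x) (z, y) > 0 \<longrightarrow>
        absolutely_continuous (measure_pmf PX) (measure_pmf (Q (z, y))))"

definition f_info ::
  "real \<Rightarrow> 'x pmf \<Rightarrow> ('zs \<times> 'yx \<Rightarrow> 'x pmf) \<Rightarrow> ('s \<Rightarrow> 'zs \<Rightarrow> real) \<Rightarrow> ('x \<Rightarrow> 'yx \<Rightarrow> real) \<Rightarrow>
   nat \<Rightarrow> real \<Rightarrow> real \<Rightarrow> 's \<Rightarrow> 'x \<Rightarrow> 'zs \<Rightarrow> 'yx \<Rightarrow> ereal" where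
  "f_info b PX Q ds dx M Ds Dx s x z y =
     elog b (RN_deriv (measure_pmf PX) (measure_pmf (Q (z, y))) x)
     + (SUP ls\<in>{0::real..}. ereal (ls * (ds s z - Ds)))
     + (SUP lx\<in>{0::real..}. ereal (lx * (dx x y - Dx)))
     - ereal (log b (real M))"

end

theory Submission
  imports Defs
begin

text \<open>
  Evaluate the infimum at the channel \<open>K x = enc x \<bind> dec\<close> realised by the code. Off the
  excess-distortion event (probability at most \<open>eps\<close>) both penalty suprema in \<open>f_info\<close> vanish,
  so \<open>f_info \<ge> \<gamma>\<close> forces \<open>Q (z, y) x \<ge> M b powr \<gamma> P x\<close>. By this change of measure the
  probability of that event is at most \<open>b powr -\<gamma> / M\<close> times the sum of \<open>K x (z, y) Q (z, y) x\<close>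
  over all \<open>x, z, y\<close>, and that sum is at most \<open>M\<close> because \<open>K x (z, y)\<close> is bounded by the sum of
  \<open>dec u (z, y)\<close> over the \<open>M\<close> messages \<open>u\<close>.
\<close>

lemma SUP_nonneg_mult_nonpos_eq_0:
  fixes c :: real
  assumes "c \<le> 0"
  shows "(SUP l\<in>{0::real..}. ereal (l * c)) = 0"
proof (rule antisym)
  show "(SUP l\<in>{0::real..}. ereal (l * c)) \<le> 0"
    by (rule SUP_least) (use assms in \<open>auto simp: mult_nonneg_nonpos\<close>)
  have "ereal (0 * c) \<le> (SUP l\<in>{0::real..}. ereal (l * c))"
    by (rule SUP_upper) auto
  then show "0 \<le> (SUP l\<in>{0::real..}. ereal (l * c))"
    by (simp add: zero_ereal_def)
qed

lemma pmf_eq_RN_deriv_times_pmf: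
  assumes "absolutely_continuous (measure_pmf P) (measure_pmf Q)"
  shows "ennreal (pmf Q x) = RN_deriv (measure_pmf P) (measure_pmf Q) x * ennreal (pmf P x)"
proof -
  let ?r = "RN_deriv (measure_pmf P) (measure_pmf Q)"
  have "density (measure_pmf P) ?r = measure_pmf Q"
    by (rule measure_pmf.density_RN_deriv) (auto simp: assms)
  then have "ennreal (pmf Q x) = emeasure (density (measure_pmf P) ?r) {x}"
    by (simp add: emeasure_pmf_single)
  also have "\<dots> = (\<integral>\<^sup>+ y. ?r y * indicator {x} y \<partial>measure_pmf P)"
    by (rule emeasure_density) auto
  also have "\<dots> = (\<integral>\<^sup>+ y. ?r x * indicator {x} y \<partial>measure_pmf P)"
    by (rule nn_integral_cong) (auto split: split_indicator)
  also have "\<dots> = ?r x * ennreal (pmf P x)"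
    by (subst nn_integral_cmult_indicator) (auto simp: emeasure_pmf_single)
  finally show ?thesis .
qed

lemma powr_mult_pmf_le_if_elog_RN_deriv_ge:
  assumes b: "b > 1"
    and ac: "absolutely_continuous (measure_pmf P) (measure_pmf Q)"
    and px: "pmf P x > 0"
    and ge: "elog b (RN_deriv (measure_pmf P) (measure_pmf Q) x) \<ge> ereal t"
  shows "b powr t * pmf P x \<le> pmf Q x"
proof -
  define R where "R = RN_deriv (measure_pmf P) (measure_pmf Q) x"
  have eq: "ennreal (pmf Q x) = R * ennreal (pmf P x)"
    unfolding R_def by (rule pmf_eq_RN_deriv_times_pmf[OF ac])
  have "R \<noteq> 0"
    using ge by (auto simp: R_def elog_def)
  moreover have "R \<noteq> \<infinity>"
    using eq px by (auto simp: ennreal_mult_top)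
  ultimately obtain r where r: "R = ennreal r" "r > 0"
    by (cases R) auto
  then have "t \<le> log b r"
    using ge by (simp add: R_def elog_def)
  then have "b powr t \<le> b powr (log b r)"
    using b by (intro powr_mono) auto
  then have "b powr t \<le> r"
    using b r by simp
  moreover have "pmf Q x = r * pmf P x"
    using eq r px by (simp add: ennreal_mult[symmetric])
  ultimately show ?thesis
    using px by (simp add: mult_right_mono)
qed

lemma pmf_ge_if_f_info_ge:
  assumes b: "b > 1" and M: "M > 0"
    and "ds s z \<le> Ds" and "dx x y \<le> Dx"
    and ac: "absolutely_continuous (measure_pmf P) (measure_pmf (Q (z, y)))"
    and px: "pmf P x > 0"
    and ge: "f_info b P Q ds dx M Ds Dx s x z y \<ge> ereal \<gamma>"
  shows "real M * b powr \<gamma> * pmf P x \<le> pmf (Q (z, y)) x"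
proof -
  have "elog b (RN_deriv (measure_pmf P) (measure_pmf (Q (z, y))) x) \<ge> ereal (\<gamma> + log b (real M))"
  proof -
    have "ereal \<gamma> \<le> elog b (RN_deriv (measure_pmf P) (measure_pmf (Q (z, y))) x) - ereal (log b (real M))"
      using ge assms(3,4) by (simp add: f_info_def SUP_nonneg_mult_nonpos_eq_0)
    then show ?thesis
      by (cases "elog b (RN_deriv (measure_pmf P) (measure_pmf (Q (z, y))) x)") auto
  qed
  then have "b powr (\<gamma> + log b (real M)) * pmf P x \<le> pmf (Q (z, y)) x"
    by (rule powr_mult_pmf_le_if_elog_RN_deriv_ge[OF b ac px])
  then show ?thesis
    using b M by (simp add: powr_add mult_ac)
qed

lemma pmf_bind_le_sum:
  assumes "finite U" and "set_pmf p \<subseteq> U"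
  shows "pmf (bind_pmf p f) y \<le> (\<Sum>u\<in>U. pmf (f u) y)"
proof -
  have "pmf (bind_pmf p f) y = (\<Sum>u\<in>U. pmf (f u) y * pmf p u)"
    unfolding pmf_bind using assms by (intro integral_measure_pmf_real) auto
  also have "\<dots> \<le> (\<Sum>u\<in>U. pmf (f u) y)"
    by (intro sum_mono) (auto simp: pmf_le_1 mult_left_le)
  finally show ?thesis .
qed

lemma sum_roundtrip_pmf_le_code_size:
  fixes enc :: "'x::finite \<Rightarrow> nat pmf" and dec :: "nat \<Rightarrow> 'y::finite pmf" and Q :: "'y \<Rightarrow> 'x pmf"
  assumes enc: "\<And>x. set_pmf (enc x) \<subseteq> {1..M}"
  shows "(\<Sum>x\<in>UNIV. \<Sum>y\<in>UNIV. pmf (bind_pmf (enc x) dec) y * pmf (Q y) x) \<le> real M"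
proof -
  have "(\<Sum>x\<in>UNIV. \<Sum>y\<in>UNIV. pmf (bind_pmf (enc x) dec) y * pmf (Q y) x)
      = (\<Sum>y\<in>UNIV. \<Sum>x\<in>UNIV. pmf (bind_pmf (enc x) dec) y * pmf (Q y) x)"
    by (rule sum.swap)
  also have "\<dots> \<le> (\<Sum>y\<in>UNIV. \<Sum>x\<in>UNIV. (\<Sum>u\<in>{1..M}. pmf (dec u) y) * pmf (Q y) x)"
    by (intro sum_mono mult_right_mono pmf_bind_le_sum enc) auto
  also have "\<dots> = (\<Sum>y\<in>UNIV. \<Sum>u\<in>{1..M}. pmf (dec u) y)"
    by (simp add: sum_distrib_left[symmetric] sum_pmf_eq_1)
  also have "\<dots> = real M"
    by (subst sum.swap) (simp add: sum_pmf_eq_1)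
  finally show ?thesis .
qed

lemma sum_pmf_times_prob_likelihood_ratio_le:
  fixes P :: "'x::finite pmf" and K :: "'x \<Rightarrow> 'y::finite pmf" and Q :: "'y \<Rightarrow> 'x pmf"
  assumes c: "c > 0"
  shows "(\<Sum>x\<in>UNIV. pmf P x * measure_pmf.prob (K x) {y. c * pmf P x \<le> pmf (Q y) x})
    \<le> (\<Sum>x\<in>UNIV. \<Sum>y\<in>UNIV. pmf (K x) y * pmf (Q y) x) / c"
proof -
  have "pmf P x * measure_pmf.prob (K x) {y. c * pmf P x \<le> pmf (Q y) x}
      \<le> (\<Sum>y\<in>UNIV. pmf (K x) y * pmf (Q y) x) / c" for x
  proof -
    have "pmf P x * measure_pmf.prob (K x) {y. c * pmf P x \<le> pmf (Q y) x}
        = (\<Sum>y\<in>{y. c * pmf P x \<le> pmf (Q y) x}. pmf (K x) y * pmf P x)"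
      by (simp add: measure_measure_pmf_finite sum_distrib_left mult.commute)
    also have "\<dots> \<le> (\<Sum>y\<in>{y. c * pmf P x \<le> pmf (Q y) x}. pmf (K x) y * (pmf (Q y) x / c))"
      using c by (intro sum_mono mult_left_mono) (auto simp: field_simps)
    also have "\<dots> \<le> (\<Sum>y\<in>UNIV. pmf (K x) y * (pmf (Q y) x / c))"
      using c by (intro sum_mono2) auto
    finally show ?thesis
      by (simp add: sum_divide_distrib)
  qed
  then show ?thesis
    by (subst sum_divide_distrib) (rule sum_mono)
qed

lemma prob_joint_SXZY_eq_sum:
  fixes PSX :: "('s \<times> 'x::finite) pmf" and K :: "'x \<Rightarrow> ('z \<times> 'y) pmf"
  shows "measure_pmf.prob (joint_SXZY PSX K) {(s, x, z, y). (z, y) \<in> C x}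
    = (\<Sum>x\<in>UNIV. pmf (map_pmf snd PSX) x * measure_pmf.prob (K x) (C x))"
proof -
  have J: "joint_SXZY PSX K = bind_pmf PSX (\<lambda>sx. map_pmf (\<lambda>zy. (fst sx, snd sx, zy)) (K (snd sx)))"
    unfolding joint_SXZY_def map_pmf_def
    by (intro bind_pmf_cong refl) (auto simp: case_prod_beta')
  have "emeasure (joint_SXZY PSX K) {(s, x, z, y). (z, y) \<in> C x}
      = (\<integral>\<^sup>+sx. emeasure (K (snd sx)) (C (snd sx)) \<partial>PSX)"
    unfolding J emeasure_bind_pmf
    by (intro nn_integral_cong) (auto intro!: arg_cong2[where f = emeasure])
  also have "\<dots> = (\<integral>\<^sup>+x. emeasure (K x) (C x) \<partial>map_pmf snd PSX)"
    by simp
  also have "\<dots> = (\<Sum>x\<in>UNIV. emeasure (K x) (C x) * pmf (map_pmf snd PSX) x)"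
    by (rule nn_integral_measure_pmf_support) auto
  also have "\<dots> = ennreal (\<Sum>x\<in>UNIV. pmf (map_pmf snd PSX) x * measure_pmf.prob (K x) (C x))"
    by (simp add: measure_pmf.emeasure_eq_measure ennreal_mult[symmetric] sum_ennreal mult.commute)
  finally show ?thesis
    by (simp add: measure_pmf.emeasure_eq_measure sum_nonneg)
qed

lemma joint_SXZY_bind_pmf:
  "joint_SXZY PSX (\<lambda>x. bind_pmf (enc x) dec)
    = do { (s, x) \<leftarrow> PSX; u \<leftarrow> enc x; (z, y) \<leftarrow> dec u; return_pmf (s, x, z, y) }"
  unfolding joint_SXZY_def by (simp add: bind_assoc_pmf case_prod_beta')

lemma is_code_prob_excess_distortion_le:
  assumes "is_code PSX ds dx M Ds Dx eps enc dec"
  shows "measure_pmf.prob (joint_SXZY PSX (\<lambda>x. bind_pmf (enc x) dec))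
    {(s, x, z, y). ds s z > Ds \<or> dx x y > Dx} \<le> eps"
  using assms unfolding is_code_def joint_SXZY_bind_pmf by simp

lemma is_code_size_pos:
  assumes "is_code PSX ds dx M Ds Dx eps enc dec"
  shows "M > 0"
proof -
  obtain u where "u \<in> set_pmf (enc x)"
    using set_pmf_not_empty by fastforce
  with assms show ?thesis
    unfolding is_code_def by fastforce
qed

lemma excess_distortion_or_pmf_ge_if_f_info_ge:
  assumes b: "b > 1" and M: "M > 0"
    and adm: "admissible_back (map_pmf snd PSX) K Q"
    and supp: "(s, x, z, y) \<in> set_pmf (joint_SXZY PSX K)"
    and f: "f_info b (map_pmf snd PSX) Q ds dx M Ds Dx s x z y \<ge> ereal \<gamma>"
  shows "ds s z > Ds \<or> dx x y > Dx \<or>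
    real M * b powr \<gamma> * pmf (map_pmf snd PSX) x \<le> pmf (Q (z, y)) x"
proof -
  have "(s, x) \<in> set_pmf PSX"
    using supp by (auto simp: joint_SXZY_def)
  then have px: "pmf (map_pmf snd PSX) x > 0"
    by (metis pmf_positive set_map_pmf image_eqI snd_conv)
  have "pmf (K x) (z, y) > 0"
    using supp by (auto simp: joint_SXZY_def pmf_positive)
  with adm px have ac: "absolutely_continuous (measure_pmf (map_pmf snd PSX)) (measure_pmf (Q (z, y)))"
    unfolding admissible_back_def by (meson mult_pos_pos)
  show ?thesis
    using pmf_ge_if_f_info_ge[OF b M _ _ ac px f] by fastforce
qed

lemma prob_f_info_ge_code_channel_le:
  fixes PSX :: "('s \<times> 'x::finite) pmf"
    and ds :: "'s \<Rightarrow> 'zs::finite \<Rightarrow> real" and dx :: "'x \<Rightarrow> 'yx::finite \<Rightarrow> real"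
  assumes b: "b > 1" and code: "is_code PSX ds dx M Ds Dx eps enc dec"
    and adm: "admissible_back (map_pmf snd PSX) (\<lambda>x. bind_pmf (enc x) dec) Q"
  shows "measure_pmf.prob (joint_SXZY PSX (\<lambda>x. bind_pmf (enc x) dec))
      {(s, x, z, y). f_info b (map_pmf snd PSX) Q ds dx M Ds Dx s x z y \<ge> ereal \<gamma>}
    \<le> eps + b powr (- \<gamma>)"
proof -
  define P where "P = map_pmf snd PSX"
  define K where "K = (\<lambda>x. bind_pmf (enc x) dec)"
  define J where "J = joint_SXZY PSX K"
  define c where "c = real M * b powr \<gamma>"
  define A where "A = {(s, x, z, y). f_info b P Q ds dx M Ds Dx s x z y \<ge> ereal \<gamma>}"
  define E where "E = {(s::'s, x::'x, z::'zs, y::'yx). ds s z > Ds \<or> dx x y > Dx}"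
  define C where "C x = {zy. c * pmf P x \<le> pmf (Q zy) x}" for x
  define B where "B = {(s::'s, x, z, y). (z, y) \<in> C x}"
  have M: "M > 0"
    using is_code_size_pos[OF code] .
  have c: "c > 0"
    using M b by (simp add: c_def)
  have "(s, x, z, y) \<in> B"
    if "(s, x, z, y) \<in> A" "(s, x, z, y) \<in> set_pmf J" "(s, x, z, y) \<notin> E" for s x z y
  proof -
    have supp: "(s, x, z, y) \<in> set_pmf (joint_SXZY PSX (\<lambda>x. bind_pmf (enc x) dec))"
      and f: "f_info b (map_pmf snd PSX) Q ds dx M Ds Dx s x z y \<ge> ereal \<gamma>"
      and "\<not> ds s z > Ds" "\<not> dx x y > Dx"
      using that by (auto simp: A_def E_def J_def K_def P_def)
    then show ?thesis
      using excess_distortion_or_pmf_ge_if_f_info_ge[OF b M adm supp f]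
      by (simp add: B_def C_def P_def c_def)
  qed
  then have "A \<inter> set_pmf J \<subseteq> E \<union> B"
    by auto
  then have "measure_pmf.prob J A \<le> measure_pmf.prob J (E \<union> B)"
    by (subst measure_Int_set_pmf[symmetric]) (intro measure_pmf.finite_measure_mono, auto)
  also have "\<dots> \<le> measure_pmf.prob J E + measure_pmf.prob J B"
    by (rule measure_Un_le) auto
  also have "measure_pmf.prob J E \<le> eps"
    using is_code_prob_excess_distortion_le[OF code] by (simp add: J_def K_def E_def)
  also have "measure_pmf.prob J B = (\<Sum>x\<in>UNIV. pmf P x * measure_pmf.prob (K x) (C x))"
    unfolding J_def B_def P_def by (rule prob_joint_SXZY_eq_sum)
  also have "\<dots> \<le> (\<Sum>x\<in>UNIV. \<Sum>zy\<in>UNIV. pmf (K x) zy * pmf (Q zy) x) / c"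
    unfolding C_def by (rule sum_pmf_times_prob_likelihood_ratio_le[OF c])
  also have "\<dots> \<le> real M / c"
    unfolding K_def
    by (intro divide_right_mono sum_roundtrip_pmf_le_code_size) (use code c in \<open>auto simp: is_code_def\<close>)
  also have "real M / c = b powr (- \<gamma>)"
    using M b by (simp add: c_def powr_minus_divide)
  finally show ?thesis
    by (simp add: A_def J_def K_def P_def)
qed

theorem theorem3:
  fixes PSX :: "('s::finite \<times> 'x::finite) pmf"
    and ds :: "'s \<Rightarrow> 'zs::finite \<Rightarrow> real"
    and dx :: "'x \<Rightarrow> 'yx::finite \<Rightarrow> real"
    and M :: nat and Ds Dx eps b :: real
    and enc :: "'x \<Rightarrow> nat pmf" and dec :: "nat \<Rightarrow> ('zs \<times> 'yx) pmf"
  assumes "b > 1"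
    and "\<And>s z. ds s z \<ge> 0" and "\<And>x y. dx x y \<ge> 0"
    and "Ds \<ge> 0" and "Dx \<ge> 0"
    and "is_code PSX ds dx M Ds Dx eps enc dec"
  shows "ereal eps \<ge>
    (INF K :: 'x \<Rightarrow> ('zs \<times> 'yx) pmf.
      SUP Q \<in> {Q. admissible_back (map_pmf snd PSX) K Q}.
        SUP \<gamma> \<in> {0::real..}.
          ereal (measure_pmf.prob (joint_SXZY PSX K)
                   {(s, x, z, y). f_info b (map_pmf snd PSX) Q ds dx M Ds Dx s x z y \<ge> ereal \<gamma>}
                 - b powr (- \<gamma>)))"
proof -
  let ?K = "\<lambda>x. bind_pmf (enc x) dec"
  have "(SUP Q \<in> {Q. admissible_back (map_pmf snd PSX) ?K Q}.
        SUP \<gamma> \<in> {0::real..}.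
          ereal (measure_pmf.prob (joint_SXZY PSX ?K)
                   {(s, x, z, y). f_info b (map_pmf snd PSX) Q ds dx M Ds Dx s x z y \<ge> ereal \<gamma>}
                 - b powr (- \<gamma>))) \<le> ereal eps"
    using prob_f_info_ge_code_channel_le[OF assms(1,6)] by (intro SUP_least) (auto simp: diff_le_eq)
  then show ?thesis
    by (meson INF_lower UNIV_I order_trans)
qed

end
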